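(* Let $g>0$ be an integer and let $P_g(x,y,z,q)$ be the Laurent polynomial \[ P_g(x,y,z,q):=(-1)^gq^{-g}\Big(y^{-g}z^{g}\prod_{i=1}^{g}(yq^i-1)+y^{g}z^{-g}\prod_{i=1}^{g}(zq^i-1)\Big) +\sum_{\substack{0\le t',u'\le g-1\\ t'+u'\le g}}(-1)^{t'+u'}\binom{g}{t';u';g-t'-u'}_q\,y^{u'-t'}z^{t'-u'}q^{t'u'-t'-u'}(x-yq^{t'}-zq^{u'}+1)\prod_{i=1}^{g-t'-1}(zq^i-1)\prod_{i=1}^{g-u'-1}(yq^i-1), \] viewed as a Laurent polynomial in $x,y,z$ with coefficients in $\mathbb{Q}(q)$. Define the weight of a monomial $x^\alpha y^\beta z^\gamma$ to be $2\alpha+\beta+\gamma$. Then among the monomials appearing in $P_g$ with nonzero coefficient there is a unique one of maximal weight, namely $x\,y^{g-1}z^{g-1}$.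
   Context: $[m]!_q=\prod_{i=1}^m(1+q+\dots+q^{i-1})$ and $\binom{g}{a;b;g-a-b}_q=[g]!_q/([a]!_q[b]!_q[g-a-b]!_q)$. *)

theory Defs
  imports "HOL-Computational_Algebra.Polynomial" "HOL-Computational_Algebra.Fraction_Field"
          "HOL-Library.Poly_Mapping" "HOL-Library.Product_Plus"
begin

type_synonym qfield = "rat poly fract"

definition qvar :: qfield where "qvar = Fract [:0, 1:] 1"

text \<open>Laurent polynomials in x, y, z over Q(q): finitely supported maps from
  exponent triples (alpha, beta, gamma) in Z^3 to Q(q), multiplied by convolution.\<close>
type_synonym laurent3 = "(int \<times> int \<times> int) \<Rightarrow>\<^sub>0 qfield"

definition mon :: "int \<Rightarrow> int \<Rightarrow> int \<Rightarrow> laurent3"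
  where "mon a b c = Poly_Mapping.single (a, b, c) 1"

definition const :: "qfield \<Rightarrow> laurent3"
  where "const c = Poly_Mapping.single (0, 0, 0) c"

definition Xv :: laurent3 where "Xv = mon 1 0 0"
definition Yv :: laurent3 where "Yv = mon 0 1 0"
definition Zv :: laurent3 where "Zv = mon 0 0 1"

definition qint :: "nat \<Rightarrow> qfield" where "qint i = (\<Sum>j<i. qvar ^ j)"
definition qfact :: "nat \<Rightarrow> qfield" where "qfact m = (\<Prod>i=1..m. qint i)"
definition qmultinom :: "nat \<Rightarrow> nat \<Rightarrow> nat \<Rightarrow> qfield"
  where "qmultinom g a b = qfact g / (qfact a * qfact b * qfact (g - a - b))"

definition P :: "nat \<Rightarrow> laurent3" where
  "P g =
     const ((-1) ^ g * qvar powi (- int g)) *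
       (mon 0 (- int g) (int g) * (\<Prod>i=1..g. Yv * const (qvar ^ i) - 1)
        + mon 0 (int g) (- int g) * (\<Prod>i=1..g. Zv * const (qvar ^ i) - 1))
   + (\<Sum>(t, u) \<in> {(t, u). t \<le> g - 1 \<and> u \<le> g - 1 \<and> t + u \<le> g}.
        const ((-1) ^ (t + u) * qmultinom g t u
               * qvar powi (int t * int u - int t - int u))
        * mon 0 (int u - int t) (int t - int u)
        * (Xv - Yv * const (qvar ^ t) - Zv * const (qvar ^ u) + 1)
        * (\<Prod>i=1..g - t - 1. Zv * const (qvar ^ i) - 1)
        * (\<Prod>i=1..g - u - 1. Yv * const (qvar ^ i) - 1))"

definition weight :: "int \<times> int \<times> int \<Rightarrow> int"
  where "weight m = (case m of (a, b, c) \<Rightarrow> 2 * a + b + c)"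

end

theory Submission
  imports Defs
begin

text \<open>Split \<open>P_g\<close> into the boundary term \<open>B_g\<close> (the first line) and the summands \<open>S_{t,u}\<close>.
  Each factor \<open>y q\<^sup>i - 1\<close>, \<open>z q\<^sup>i - 1\<close>, \<open>x - y q\<^sup>t - z q\<^sup>u + 1\<close> has a unique monomial of top
  weight (\<open>y\<close>, \<open>z\<close>, resp. \<open>x\<close>), and the top term of a product is the product of the top terms.
  Hence \<open>B_g\<close> has weight at most \<open>g\<close> and \<open>S_{t,u}\<close> weight at most \<open>2g - t - u\<close>, so only \<open>S_{0,0}\<close>
  reaches weight \<open>2g\<close>, with the single monomial \<open>x y\<^sup>g\<^sup>-\<^sup>1 z\<^sup>g\<^sup>-\<^sup>1\<close> and coefficient
  \<open>(\<Prod>i=1..g-1. q\<^sup>i)\<^sup>2\<close>, which is nonzero since \<open>Q(q)\<close> is ordered with \<open>q > 0\<close>.\<close>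

lemma weight_zero [simp]: "weight 0 = 0"
  by (simp add: weight_def zero_prod_def)

lemma weight_add: "weight (a + b) = weight a + weight b"
  by (cases a; cases b) (simp add: weight_def)

definition weight_le :: "int \<Rightarrow> (int \<times> int \<times> int \<Rightarrow>\<^sub>0 'b::zero) \<Rightarrow> bool"
  where "weight_le n p \<longleftrightarrow> (\<forall>m \<in> Poly_Mapping.keys p. weight m \<le> n)"

lemma weight_le_mono: "weight_le n p \<Longrightarrow> n \<le> n' \<Longrightarrow> weight_le n' p"
  by (auto simp: weight_le_def)

lemma weight_le_single: "weight k \<le> n \<Longrightarrow> weight_le n (Poly_Mapping.single k c)"
  by (simp add: weight_le_def)

lemma weight_le_add:
  "weight_le n p \<Longrightarrow> weight_le n r \<Longrightarrow> weight_le n (p + (r :: _ \<Rightarrow>\<^sub>0 'b::monoid_add))"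
  using keys_add[of p r] by (auto simp: weight_le_def)

lemma weight_le_sum:
  "(\<And>i. i \<in> A \<Longrightarrow> weight_le n (f i)) \<Longrightarrow> weight_le n (\<Sum>i\<in>A. f i :: _ \<Rightarrow>\<^sub>0 'b::comm_monoid_add)"
  using keys_sum[of f A] by (fastforce simp: weight_le_def)

lemma weight_le_mult:
  assumes "weight_le n p" "weight_le n' (r :: _ \<Rightarrow>\<^sub>0 'b::semiring_0)"
  shows "weight_le (n + n') (p * r)"
  unfolding weight_le_def
proof
  fix m assume "m \<in> Poly_Mapping.keys (p * r)"
  then obtain a b where "m = a + b" "a \<in> Poly_Mapping.keys p" "b \<in> Poly_Mapping.keys r"
    using keys_mult[of p r] by blast
  with assms show "weight m \<le> n + n'"
    by (simp add: weight_le_def weight_add add_mono)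
qed

definition leading_term :: "int \<times> int \<times> int \<Rightarrow> 'b \<Rightarrow> (int \<times> int \<times> int \<Rightarrow>\<^sub>0 'b::ab_group_add) \<Rightarrow> bool"
  where "leading_term k c p \<longleftrightarrow> weight_le (weight k - 1) (p - Poly_Mapping.single k c)"

lemma leading_term_imp_weight_le:
  assumes "leading_term k c p"
  shows "weight_le (weight k) p"
proof -
  have "weight_le (weight k) (p - Poly_Mapping.single k c)"
    using assms by (auto simp: leading_term_def intro: weight_le_mono)
  moreover have "weight_le (weight k) (Poly_Mapping.single k c)"
    by (simp add: weight_le_single)
  ultimately show ?thesis
    using weight_le_add by fastforce
qed

lemma leading_term_single: "leading_term k c (Poly_Mapping.single k c)"
  by (simp add: leading_term_def weight_le_def)

lemma leading_term_add:
  assumes "leading_term k c p" "weight_le (weight k - 1) r"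
  shows "leading_term k c (p + r)"
proof -
  have "p + r - Poly_Mapping.single k c = (p - Poly_Mapping.single k c) + r"
    by (simp add: algebra_simps)
  with assms show ?thesis
    unfolding leading_term_def by (simp only: weight_le_add)
qed

lemma leading_term_diff:
  "leading_term k c p \<Longrightarrow> weight_le (weight k - 1) r \<Longrightarrow> leading_term k c (p - r)"
  using leading_term_add[of k c p "- r"] by (simp add: weight_le_def)

lemma leading_term_mult:
  fixes p r :: "_ \<Rightarrow>\<^sub>0 'b::ring"
  assumes p: "leading_term k c p" and r: "leading_term l d r"
  shows "leading_term (k + l) (c * d) (p * r)"
proof -
  let ?s = "Poly_Mapping.single k c" and ?t = "Poly_Mapping.single l d"
  have "p * r - Poly_Mapping.single (k + l) (c * d) = (p - ?s) * r + ?s * (r - ?t)"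
    by (simp add: mult_single[symmetric] algebra_simps)
  moreover have "weight_le (weight k - 1 + weight l) ((p - ?s) * r)"
    using p leading_term_imp_weight_le[OF r] by (intro weight_le_mult) (simp_all add: leading_term_def)
  moreover have "weight_le (weight k + (weight l - 1)) (?s * (r - ?t))"
    using r by (intro weight_le_mult weight_le_single) (simp_all add: leading_term_def)
  ultimately show ?thesis
    unfolding leading_term_def weight_add diff_add_eq add_diff_eq by (simp only: weight_le_add)
qed

lemma leading_term_prod:
  fixes f :: "_ \<Rightarrow> _ \<Rightarrow>\<^sub>0 'b::comm_ring_1"
  assumes "finite A" "\<And>i. i \<in> A \<Longrightarrow> leading_term (k i) (c i) (f i)"
  shows "leading_term (\<Sum>i\<in>A. k i) (\<Prod>i\<in>A. c i) (\<Prod>i\<in>A. f i)"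
  using assms
proof (induction A rule: finite_induct)
  case empty
  show ?case using leading_term_single[of 0 "1::'b"] by simp
next
  case (insert i A)
  then show ?case by (simp add: leading_term_mult)
qed

lemma leading_term_keys:
  assumes "leading_term k c p" "c \<noteq> 0"
  shows "k \<in> Poly_Mapping.keys p" "\<forall>m \<in> Poly_Mapping.keys p. m \<noteq> k \<longrightarrow> weight m < weight k"
proof -
  let ?r = "p - Poly_Mapping.single k c"
  have r: "weight_le (weight k - 1) ?r"
    using assms(1) by (simp add: leading_term_def)
  then have "k \<notin> Poly_Mapping.keys ?r"
    by (auto simp: weight_le_def)
  then show "k \<in> Poly_Mapping.keys p"
    using assms(2) by (simp add: in_keys_iff lookup_minus)
  show "\<forall>m \<in> Poly_Mapping.keys p. m \<noteq> k \<longrightarrow> weight m < weight k"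
  proof (intro ballI impI)
    fix m assume "m \<in> Poly_Mapping.keys p" "m \<noteq> k"
    then have "m \<in> Poly_Mapping.keys ?r"
      by (simp add: in_keys_iff lookup_minus lookup_single)
    with r show "weight m < weight k"
      by (auto simp: weight_le_def)
  qed
qed

lemma qvar_pos: "0 < qvar"
proof -
  have "0 < [:0, 1 :: rat:]"
    by (simp add: less_poly_def pos_poly_pCons)
  then show ?thesis
    by (simp add: qvar_def zero_less_Fract_iff)
qed

lemma qint_pos: "0 < i \<Longrightarrow> 0 < qint i"
  unfolding qint_def using qvar_pos by (intro sum_pos) auto

lemma qmultinom_0_0: "qmultinom g 0 0 = 1"
proof -
  have "qfact g \<noteq> 0"
    unfolding qfact_def using qint_pos by (intro prod_pos less_imp_neq[symmetric]) auto
  then show ?thesis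
    by (simp add: qmultinom_def qfact_def)
qed

lemma const_eq_single: "const c = Poly_Mapping.single 0 c"
  by (simp add: const_def zero_prod_def)

lemma mon_times_const: "mon a b d * const c = Poly_Mapping.single (a, b, d) c"
  by (simp add: mon_def const_eq_single mult_single)

lemma mon_0_0_0 [simp]: "mon 0 0 0 = 1"
  by (simp add: mon_def zero_prod_def[symmetric])

lemma weight_le_const: "weight_le 0 (const c)"
  by (simp add: const_eq_single weight_le_single)

lemma weight_le_mon: "weight (a, b, d) \<le> n \<Longrightarrow> weight_le n (mon a b d)"
  by (simp add: mon_def weight_le_single)

lemma leading_term_mon_times_const_minus_one:
  assumes "0 < weight (a, b, d)"
  shows "leading_term (a, b, d) c (mon a b d * const c - 1)"
  unfolding mon_times_const
  by (rule leading_term_diff[OF leading_term_single]) (use assms in \<open>simp add: weight_le_def\<close>)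

lemma leading_term_prod_mon_times_const_minus_one:
  assumes "finite A" "0 < weight (a, b, d)"
  shows "leading_term (int (card A) * a, int (card A) * b, int (card A) * d) (\<Prod>i\<in>A. c i)
           (\<Prod>i\<in>A. mon a b d * const (c i) - 1)"
proof -
  have "leading_term (\<Sum>i\<in>A. (a, b, d)) (\<Prod>i\<in>A. c i) (\<Prod>i\<in>A. mon a b d * const (c i) - 1)"
    using assms by (intro leading_term_prod leading_term_mon_times_const_minus_one)
  then show ?thesis
    by (simp add: sum_prod)
qed

lemma leading_term_prod_Y:
  "leading_term (0, int n, 0) (\<Prod>i=1..n. qvar ^ i) (\<Prod>i=1..n. Yv * const (qvar ^ i) - 1)"
  using leading_term_prod_mon_times_const_minus_one[of "{1..n}" 0 1 0]
  by (simp add: Yv_def weight_def)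

lemma leading_term_prod_Z:
  "leading_term (0, 0, int n) (\<Prod>i=1..n. qvar ^ i) (\<Prod>i=1..n. Zv * const (qvar ^ i) - 1)"
  using leading_term_prod_mon_times_const_minus_one[of "{1..n}" 0 0 1]
  by (simp add: Zv_def weight_def)

lemma leading_term_linear_factor: "leading_term (1, 0, 0) 1 (Xv - Yv * const a - Zv * const b + 1)"
  unfolding Xv_def Yv_def Zv_def mon_times_const
  by (intro leading_term_add leading_term_diff)
     (auto simp: mon_def weight_def zero_prod_def weight_le_def intro: leading_term_single)

definition P_boundary :: "nat \<Rightarrow> laurent3" where
  "P_boundary g =
     const ((-1) ^ g * qvar powi (- int g)) *
       (mon 0 (- int g) (int g) * (\<Prod>i=1..g. Yv * const (qvar ^ i) - 1)
        + mon 0 (int g) (- int g) * (\<Prod>i=1..g. Zv * const (qvar ^ i) - 1))"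

definition P_summand :: "nat \<Rightarrow> nat \<Rightarrow> nat \<Rightarrow> laurent3" where
  "P_summand g t u =
     const ((-1) ^ (t + u) * qmultinom g t u * qvar powi (int t * int u - int t - int u))
     * mon 0 (int u - int t) (int t - int u)
     * (Xv - Yv * const (qvar ^ t) - Zv * const (qvar ^ u) + 1)
     * (\<Prod>i=1..g - t - 1. Zv * const (qvar ^ i) - 1)
     * (\<Prod>i=1..g - u - 1. Yv * const (qvar ^ i) - 1)"

lemma P_eq_boundary_plus_sum:
  "P g = P_boundary g + (\<Sum>(t, u) \<in> {(t, u). t \<le> g - 1 \<and> u \<le> g - 1 \<and> t + u \<le> g}. P_summand g t u)"
  unfolding P_def P_boundary_def P_summand_def ..

lemma weight_le_P_boundary: "weight_le (int g) (P_boundary g)"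
proof -
  have "weight_le (0 + (0 + int g)) (P_boundary g)"
    unfolding P_boundary_def
    using leading_term_imp_weight_le[OF leading_term_prod_Y[of g]]
      leading_term_imp_weight_le[OF leading_term_prod_Z[of g]]
    by (intro weight_le_mult weight_le_add weight_le_const weight_le_mon) (simp_all add: weight_def)
  then show ?thesis
    by simp
qed

lemma weight_le_P_summand:
  assumes "t < g" "u < g"
  shows "weight_le (2 * int g - int t - int u) (P_summand g t u)"
proof -
  have "weight_le (0 + 0 + 2 + int (g - t - 1) + int (g - u - 1)) (P_summand g t u)"
    unfolding P_summand_def
    using leading_term_imp_weight_le[OF leading_term_linear_factor]
      leading_term_imp_weight_le[OF leading_term_prod_Z[of "g - t - 1"]]
      leading_term_imp_weight_le[OF leading_term_prod_Y[of "g - u - 1"]]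
    by (intro weight_le_mult weight_le_const weight_le_mon) (simp_all add: weight_def)
  then show ?thesis
    by (rule weight_le_mono) (use assms in simp)
qed

lemma leading_term_P_summand_0_0:
  assumes "0 < g"
  shows "leading_term (1, int g - 1, int g - 1) ((\<Prod>i=1..g - 1. qvar ^ i)\<^sup>2) (P_summand g 0 0)"
proof -
  have "P_summand g 0 0 = (Xv - Yv * const 1 - Zv * const 1 + 1)
      * (\<Prod>i=1..g - 1. Zv * const (qvar ^ i) - 1) * (\<Prod>i=1..g - 1. Yv * const (qvar ^ i) - 1)"
    by (simp add: P_summand_def qmultinom_0_0 const_eq_single)
  moreover have "leading_term ((1, 0, 0) + (0, 0, int (g - 1)) + (0, int (g - 1), 0))
      (1 * (\<Prod>i=1..g - 1. qvar ^ i) * (\<Prod>i=1..g - 1. qvar ^ i)) \<dots>"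
    by (intro leading_term_mult leading_term_linear_factor leading_term_prod_Y leading_term_prod_Z)
  ultimately show ?thesis
    using assms by (simp add: power2_eq_square)
qed

lemma leading_term_P:
  assumes "0 < g"
  shows "leading_term (1, int g - 1, int g - 1) ((\<Prod>i=1..g - 1. qvar ^ i)\<^sup>2) (P g)"
proof -
  let ?S = "{(t, u). t \<le> g - 1 \<and> u \<le> g - 1 \<and> t + u \<le> g}"
  let ?rest = "\<Sum>(t, u) \<in> ?S - {(0, 0)}. P_summand g t u"
  have top_weight: "weight (1, int g - 1, int g - 1) - 1 = 2 * int g - 1"
    by (simp add: weight_def)
  have "finite ?S"
    by (rule finite_subset[of _ "{..g} \<times> {..g}"]) auto
  then have "(\<Sum>(t, u) \<in> ?S. P_summand g t u) = P_summand g 0 0 + ?rest"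
    by (subst sum.remove[of _ "(0, 0)"]) auto
  then have "P g = (P_summand g 0 0 + ?rest) + P_boundary g"
    by (simp add: P_eq_boundary_plus_sum add.commute)
  moreover have "weight_le (2 * int g - 1) ?rest"
  proof (rule weight_le_sum)
    fix tu assume "tu \<in> ?S - {(0, 0)}"
    moreover obtain t u where "tu = (t, u)"
      by fastforce
    ultimately have "tu = (t, u)" "t < g" "u < g" "1 \<le> t + u"
      using assms by auto
    then show "weight_le (2 * int g - 1) (case tu of (t, u) \<Rightarrow> P_summand g t u)"
      using weight_le_P_summand[of t g u] by (auto elim!: weight_le_mono)
  qed
  moreover have "weight_le (2 * int g - 1) (P_boundary g)"
    using weight_le_P_boundary by (rule weight_le_mono) (use assms in simp)
  ultimately show ?thesis
    using leading_term_P_summand_0_0[OF assms] by (simp add: top_weight leading_term_add)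
qed

theorem proposition5p5:
  fixes g :: nat
  assumes "g > 0"
  shows "(1, int g - 1, int g - 1) \<in> Poly_Mapping.keys (P g)
         \<and> (\<forall>m \<in> Poly_Mapping.keys (P g). m \<noteq> (1, int g - 1, int g - 1)
                \<longrightarrow> weight m < weight (1, int g - 1, int g - 1))"
proof -
  have "(\<Prod>i=1..g - 1. qvar ^ i)\<^sup>2 \<noteq> 0"
    using qvar_pos by simp
  with leading_term_keys[OF leading_term_P[OF assms]] show ?thesis
    by blast
qed

end
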